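(* Consider the finite-sum problem $\min_{\theta\in\mathbb{R}^n}\Psi(\theta)=\frac1N\sum_{i=1}^N\psi_i(\theta)$ and the following stochastic method (S2QN). Fix constants $0<r_1<r_2$, a positive sequence $\{\alpha_k\}$, and step sizes $\{\beta_k\}$. At iteration $k$, random index sets $\mathcal S_g^k\subseteq\{1,\dots,N\}$ are chosen, $g_k=\nabla_{\mathcal S_g^k}\Psi(\theta_k):=\frac{1}{|\mathcal S_g^k|}\sum_{i\in\mathcal S_g^k}\nabla\psi_i(\theta_k)$, a symmetric matrix $B_k=H_k+\Lambda_k$ is formed, the regularization parameter is $$\lambda_k=\begin{cases}\frac{2r_1}{\|g_{k-1}\|+r_1}\alpha_k^{-1}, & \|g_{k-1}\|<r_1,\\ \frac{2\|g_{k-1}\|}{\|g_{k-1}\|+r_2}\alpha_k^{-1}, & \|g_{k-1}\|>r_2,\\ \alpha_k^{-1}, &\text{otherwise},\end{cases}$$ and $\theta_{k+1}=\theta_k+\beta_k d_k$ with $d_k=-(B_k+\lambda_kI)^{-1}g_k$. Let $\{\mathcal F_k\}$ be a filtration with $\theta_k$ being $\mathcal F_{k-1}$-measurable. Assume: (i) $\Psi$ is continuously differentiable on $\mathbb{R}^n$, bounded below by $\Psi_{\inf}$, and $\nabla\Psi$ is Lipschitz continuous on $\mathbb{R}^n$ with constant $L_\Psi\ge 1$; (ii) for every $k$, $B_k$ and $\nabla_{\mathcal S_g^k}\Psi(\theta_k)$ are conditionally independent given $\mathcal F_{k-1}$, and almost surely $\mathbb{E}[\nabla_{\mathcal S_g^k}\Psi(\theta_k)\mid\mathcal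 F_{k-1}]=\nabla\Psi(\theta_k)$; (iii) almost surely $\mathbb{E}[\|\nabla_{\mathcal S_g^k}\Psi(\theta_k)-\nabla\Psi(\theta_k)\|^2\mid\mathcal F_{k-1}]\le\sigma_k^2$; (iv) there is $h>0$ with $0\preceq B_k\preceq hI$ for all $k$; (v) (Polyak–Łojasiewicz condition) there is $c\in(0,\infty)$ such that $2c(\Psi(\theta)-\Psi_{\inf})\le\|\nabla\Psi(\theta)\|^2$ for all $\theta\in\mathbb{R}^n$. Suppose $\beta_k\equiv1$, $\alpha_k\equiv\alpha<\min\{\frac{r_1}{4r_2(L_\Psi+h)},\frac8c\}$, and $\sigma_k^2\le M_\sigma\zeta^k$ for some scalar $M_\sigma$ and some $\zeta\in(0,1)$. Then $$\mathbb{E}[\Psi(\theta_k)]-\Psi_{\inf}\le\mu\nu^{k-1}\quad\text{for all }k,$$ where $\nu=\max\{\zeta,1-\frac{1}{16}c\alpha\}$ and $\mu=\max\{\Psi(\theta_1)-\Psi_{\inf},\frac{15M_\sigma}{c}\}$.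
   Context: $\psi_i:\mathbb{R}^n\to\mathbb{R}$ are component functions. The base matrix $H_k$ represents partial Hessian information and $\Lambda_k$ is a quasi-Newton refinement matrix; the theorem only uses the properties (ii) and (iv) of $B_k=H_k+\Lambda_k$. $g_{k-1}$ denotes the stochastic gradient used at the previous iteration. *)

theory Defs
  imports "HOL-Analysis.Analysis" "HOL-Probability.Probability"
begin

text \<open>Regularization parameter of S2QN: lambda_k as a function of x = norm g_(k-1).\<close>
definition s2qn_lambda :: "real \<Rightarrow> real \<Rightarrow> real \<Rightarrow> real \<Rightarrow> real" where
  "s2qn_lambda r1 r2 \<alpha> x =
     (if x < r1 then (2 * r1 / (x + r1)) / \<alpha>
      else if x > r2 then (2 * x / (x + r2)) / \<alpha>
      else 1 / \<alpha>)"

definition cond_indep ::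
  "'a measure \<Rightarrow> 'a measure \<Rightarrow> ('a \<Rightarrow> 'b::topological_space) \<Rightarrow> ('a \<Rightarrow> 'c::topological_space) \<Rightarrow> bool" where
  "cond_indep M G X Y \<longleftrightarrow>
     (\<forall>A \<in> sets borel. \<forall>C \<in> sets borel.
        AE \<omega> in M.
          nn_cond_exp M G (indicator {x \<in> space M. X x \<in> A \<and> Y x \<in> C}) \<omega> =
          nn_cond_exp M G (indicator {x \<in> space M. X x \<in> A}) \<omega> *
          nn_cond_exp M G (indicator {x \<in> space M. Y x \<in> C}) \<omega>)"

definition psd_between :: "real \<Rightarrow> real^'n^'n \<Rightarrow> bool" where
  "psd_between h B \<longleftrightarrow> (\<forall>v. 0 \<le> v \<bullet> (B *v v) \<and> v \<bullet> (B *v v) \<le> h * (v \<bullet> v))"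

end

theory Submission
  imports Defs
begin

(* Each iteration contracts the optimality gap up to a noise term, pointwise in the sample.
   For w = (B_k + lambda_k I)^-1 g_k the spectral bounds 0 <= B_k <= h I and
   1/alpha <= lambda_k <= 2/alpha give lambda_k |w|^2 <= w.g_k and |g_k|^2 <= (h + lambda_k) w.g_k.
   The descent lemma for the L-smooth Psi and Young's inequality for the error
   e = g_k - grad Psi(theta_k) show that the step decreases Psi by (3/8) w.g_k up to alpha |e|^2 / 2,
   and the Polyak-Lojasiewicz inequality bounds w.g_k from below by the gap, whence
     Psi(theta_(k+1)) - Psi_inf <= (1 - c alpha / 6) (Psi(theta_k) - Psi_inf) + (2 alpha / 3) |e|^2.
   Integrating, the tower property and (iii) bound E |e|^2 by sigma_k^2, and the resulting linear
   recursion with sigma_k^2 <= M_sigma zeta^k is solved by induction. *)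

lemma psd_between_norm_mult_sq_le:
  fixes B :: "real^'n^'n"
  assumes sym: "transpose B = B" and psd: "psd_between h B" and h: "h > 0"
  shows "(norm (B *v v))\<^sup>2 \<le> h * (v \<bullet> (B *v v))"
proof -
  \<comment> \<open>Evaluate the nonnegative form at v - (B v) / h and bound the remaining term by h.\<close>
  define u where "u = B *v v"
  define t where "t = 1 / h"
  have self_adjoint: "(B *v x) \<bullet> y = x \<bullet> (B *v y)" for x y
    by (metis sym dot_lmul_matrix vector_transpose_matrix)
  have "0 \<le> (v - t *\<^sub>R u) \<bullet> (B *v (v - t *\<^sub>R u))"
    using psd unfolding psd_between_def by blast
  also have "\<dots> = v \<bullet> u - 2 * t * (u \<bullet> u) + t\<^sup>2 * (u \<bullet> (B *v u))"
    using self_adjoint[of v u]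
    by (simp add: u_def matrix_vector_mult_diff_distrib inner_diff_left inner_diff_right
        inner_commute power2_eq_square algebra_simps)
  also have "\<dots> \<le> v \<bullet> u - 2 * t * (u \<bullet> u) + t\<^sup>2 * (h * (u \<bullet> u))"
    using psd unfolding psd_between_def by (simp add: mult_left_mono)
  also have "\<dots> = v \<bullet> u - (u \<bullet> u) / h"
    using h by (simp add: t_def power2_eq_square field_simps)
  finally show ?thesis
    using h by (simp add: u_def power2_norm_eq_inner inner_commute field_simps)
qed

lemma coercive_matrix_mult_inv:
  fixes C :: "real^'n^'n"
  assumes coercive: "\<And>w. lam * (norm w)\<^sup>2 \<le> w \<bullet> (C *v w)" and lam: "lam > 0"
  shows "C *v (matrix_inv C *v y) = y"
proof -
  have "C *v x = 0 \<longrightarrow> x = 0" for x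
    using coercive[of x] lam by (auto simp: mult_le_0_iff)
  then have "invertible C"
    by (simp add: invertible_left_inverse matrix_left_invertible_ker)
  then have "C ** matrix_inv C = mat 1"
    unfolding invertible_def matrix_inv_def by (rule someI2_ex) blast
  then show ?thesis
    by (simp add: matrix_vector_mul_assoc)
qed

lemma regularized_solve_bounds:
  fixes B :: "real^'n^'n" and y :: "real^'n"
  assumes sym: "transpose B = B" and psd: "psd_between h B" and h: "h > 0" and lam: "lam > 0"
  defines "w \<equiv> matrix_inv (B + lam *\<^sub>R mat 1) *v y"
  shows "lam * (norm w)\<^sup>2 \<le> w \<bullet> y"
    and "(norm y)\<^sup>2 \<le> (h + lam) * (w \<bullet> y)"
proof -
  have regularized: "(B + lam *\<^sub>R mat 1) *v v = B *v v + lam *\<^sub>R v" for v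
    by (simp add: matrix_vector_mult_add_rdistrib flip: scaleR_matrix_vector_assoc)
  have form_bounds: "0 \<le> v \<bullet> (B *v v)" "v \<bullet> (B *v v) \<le> h * (v \<bullet> v)" for v
    using psd unfolding psd_between_def by auto
  have coercive: "lam * (norm v)\<^sup>2 \<le> v \<bullet> ((B + lam *\<^sub>R mat 1) *v v)" for v
    using form_bounds(1)[of v] by (simp add: regularized inner_add_right power2_norm_eq_inner)
  have y_eq: "y = B *v w + lam *\<^sub>R w"
    using coercive_matrix_mult_inv[OF coercive lam, of y] by (simp add: w_def regularized)
  show "lam * (norm w)\<^sup>2 \<le> w \<bullet> y"
    using coercive[of w] by (simp add: y_eq regularized)
  have "(norm y)\<^sup>2 = (norm (B *v w))\<^sup>2 + 2 * lam * (w \<bullet> (B *v w)) + lam\<^sup>2 * (w \<bullet> w)"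
    unfolding y_eq power2_norm_eq_inner
    by (simp add: inner_add_left inner_add_right inner_commute algebra_simps power2_eq_square)
  also have "\<dots> \<le> h * (w \<bullet> (B *v w)) + lam * (w \<bullet> (B *v w)) + lam * (h * (w \<bullet> w)) + lam\<^sup>2 * (w \<bullet> w)"
    using psd_between_norm_mult_sq_le[OF sym psd h, of w] mult_left_mono[OF form_bounds(2)[of w], of lam] lam
    by linarith
  also have "\<dots> = (h + lam) * (w \<bullet> y)"
    by (simp add: y_eq inner_add_right algebra_simps power2_eq_square)
  finally show "(norm y)\<^sup>2 \<le> (h + lam) * (w \<bullet> y)" .
qed

lemma s2qn_lambda_bounds:
  assumes "0 < r1" "r1 < r2" "0 < a" "0 \<le> x"
  shows "1 / a \<le> s2qn_lambda r1 r2 a x" and "s2qn_lambda r1 r2 a x \<le> 2 / a"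
proof -
  have "1 \<le> 2 * r1 / (x + r1) \<and> 2 * r1 / (x + r1) \<le> 2" if "x < r1"
    using assms that by (auto simp: field_simps)
  moreover have "1 \<le> 2 * x / (x + r2) \<and> 2 * x / (x + r2) \<le> 2" if "x > r2"
    using assms that by (auto simp: field_simps)
  ultimately have "1 \<le> s2qn_lambda r1 r2 a x * a \<and> s2qn_lambda r1 r2 a x * a \<le> 2"
    using assms by (auto simp: s2qn_lambda_def)
  then show "1 / a \<le> s2qn_lambda r1 r2 a x" "s2qn_lambda r1 r2 a x \<le> 2 / a"
    using assms(3) by (simp_all add: field_simps)
qed

lemma lipschitz_gradient_quadratic_upper_bound:
  fixes f :: "'v::real_inner \<Rightarrow> real"
  assumes der: "\<And>x. (f has_derivative (\<lambda>v. G x \<bullet> v)) (at x)"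
    and lip: "\<And>x y. norm (G x - G y) \<le> L * norm (x - y)" and L: "L \<ge> 0"
  shows "f (x + d) \<le> f x + G x \<bullet> d + L / 2 * (norm d)\<^sup>2"
proof -
  define \<phi> where "\<phi> t = f (x + t *\<^sub>R d) - t * (G x \<bullet> d) - L / 2 * t\<^sup>2 * (norm d)\<^sup>2" for t
  have line_deriv: "((\<lambda>t. f (x + t *\<^sub>R d)) has_real_derivative (G (x + t *\<^sub>R d) \<bullet> d)) (at t)" for t
  proof -
    have "((\<lambda>t. f (x + t *\<^sub>R d)) has_derivative (\<lambda>s. G (x + t *\<^sub>R d) \<bullet> (s *\<^sub>R d))) (at t)"
      by (rule has_derivative_compose[OF _ der]) (auto intro!: derivative_eq_intros)
    then show ?thesis
      unfolding has_field_derivative_def by (rule has_derivative_eq_rhs) (simp add: fun_eq_iff)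
  qed
  have "(\<phi> has_real_derivative (G (x + t *\<^sub>R d) \<bullet> d - G x \<bullet> d - L * t * (norm d)\<^sup>2)) (at t)" for t
    unfolding \<phi>_def by (rule derivative_eq_intros line_deriv refl | simp)+
  then obtain z where z: "0 < z" "z < 1"
    and mvt: "\<phi> 1 - \<phi> 0 = G (x + z *\<^sub>R d) \<bullet> d - G x \<bullet> d - L * z * (norm d)\<^sup>2"
    using MVT2[of 0 1 \<phi>] by force
  have "G (x + z *\<^sub>R d) \<bullet> d - G x \<bullet> d = (G (x + z *\<^sub>R d) - G x) \<bullet> d"
    by (simp add: inner_diff_left)
  also have "\<dots> \<le> norm (G (x + z *\<^sub>R d) - G x) * norm d"
    by (rule norm_cauchy_schwarz)
  also have "\<dots> \<le> L * z * (norm d)\<^sup>2"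
    using mult_right_mono[OF lip[of "x + z *\<^sub>R d" x] norm_ge_zero[of d]] z
    by (simp add: power2_eq_square mult.assoc)
  finally have "\<phi> 1 \<le> \<phi> 0"
    using mvt by simp
  then show ?thesis
    unfolding \<phi>_def by simp
qed

text \<open>In the next two lemmas w stands for (B + lam I)\<inverse> y with y the stochastic gradient;
  only the two bounds of regularized_solve_bounds are used.\<close>

lemma regularized_step_decrease:
  fixes f :: "'v::real_inner \<Rightarrow> real"
  assumes der: "\<And>x. (f has_derivative (\<lambda>v. G x \<bullet> v)) (at x)"
    and lip: "\<And>x y. norm (G x - G y) \<le> L * norm (x - y)" and L: "L \<ge> 0"
    and a: "a > 0" "a * L \<le> 1/4" and lam: "1 / a \<le> lam"
    and coercive: "lam * (norm w)\<^sup>2 \<le> w \<bullet> y"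
  shows "f (x - w) \<le> f x - 3/8 * (w \<bullet> y) + a / 2 * (norm (y - G x))\<^sup>2"
proof -
  define e where "e = y - G x"
  have lam_pos: "lam > 0" and inv_lam: "1 / lam \<le> a"
    using a lam by (auto simp: field_simps less_le_trans[of 0 "1/a" lam])
  have wy_nonneg: "0 \<le> w \<bullet> y"
    using coercive lam_pos by (smt (verit) zero_le_mult_iff zero_le_power2)
  have W: "(norm w)\<^sup>2 \<le> a * (w \<bullet> y)"
  proof -
    have "(norm w)\<^sup>2 \<le> (w \<bullet> y) / lam"
      using coercive lam_pos by (simp add: field_simps)
    also have "\<dots> \<le> a * (w \<bullet> y)"
      using mult_right_mono[OF inv_lam wy_nonneg] by simp
    finally show ?thesis .
  qed
  \<comment> \<open>Young's inequality with weight lam.\<close>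
  have cross: "e \<bullet> w \<le> (w \<bullet> y) / 2 + a / 2 * (norm e)\<^sup>2"
  proof -
    have "2 * lam * (norm e * norm w) \<le> lam\<^sup>2 * (norm w)\<^sup>2 + (norm e)\<^sup>2"
      using zero_le_power2[of "lam * norm w - norm e"] by (simp add: power2_eq_square algebra_simps)
    then have "2 * (norm e * norm w) \<le> lam * (norm w)\<^sup>2 + (norm e)\<^sup>2 / lam"
      using lam_pos by (simp add: field_simps power2_eq_square)
    also have "\<dots> \<le> w \<bullet> y + a * (norm e)\<^sup>2"
      using coercive mult_right_mono[OF inv_lam, of "(norm e)\<^sup>2"] by simp
    finally show ?thesis
      using norm_cauchy_schwarz[of e w] by linarith
  qed
  have "f (x - w) \<le> f x - G x \<bullet> w + L / 2 * (norm w)\<^sup>2"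
    using lipschitz_gradient_quadratic_upper_bound[OF der lip L, of x "- w"] by simp
  also have "G x \<bullet> w = w \<bullet> y - e \<bullet> w"
    by (simp add: e_def inner_diff_right inner_commute)
  also have "L / 2 * (norm w)\<^sup>2 \<le> (w \<bullet> y) / 8"
    using mult_left_mono[OF W L] mult_right_mono[OF a(2) wy_nonneg] by (simp add: algebra_simps)
  finally show ?thesis
    using cross by (simp add: e_def)
qed

lemma regularized_step_contraction:
  fixes f :: "'v::real_inner \<Rightarrow> real"
  assumes der: "\<And>x. (f has_derivative (\<lambda>v. G x \<bullet> v)) (at x)"
    and lip: "\<And>x y. norm (G x - G y) \<le> L * norm (x - y)" and L: "L \<ge> 0"
    and PL: "2 * c * (f x - finf) \<le> (norm (G x))\<^sup>2"
    and a: "a > 0" "a * L \<le> 1/4" "a * h \<le> 1/4" and lam: "1 / a \<le> lam" "lam \<le> 2 / a"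
    and coercive: "lam * (norm w)\<^sup>2 \<le> w \<bullet> y"
    and bounded: "(norm y)\<^sup>2 \<le> (h + lam) * (w \<bullet> y)"
  shows "f (x - w) - finf \<le> (1 - c * a / 6) * (f x - finf) + 2 * a / 3 * (norm (y - G x))\<^sup>2"
proof -
  define E where "E = (norm (y - G x))\<^sup>2"
  have wy_nonneg: "0 \<le> w \<bullet> y"
    using coercive a lam by (smt (verit) zero_le_mult_iff zero_le_power2 divide_pos_pos)
  have "(norm (G x))\<^sup>2 \<le> (norm y + norm (y - G x))\<^sup>2"
    using norm_triangle_sub[of "G x" y] by (simp add: power_mono norm_minus_commute)
  also have "\<dots> \<le> 2 * (norm y)\<^sup>2 + 2 * E"
    unfolding E_def by (smt (verit) power2_sum sum_squares_ge_zero power2_diff zero_le_power2)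
  finally have "a * (norm (G x))\<^sup>2 \<le> a * (2 * (norm y)\<^sup>2 + 2 * E)"
    using a(1) by (simp add: mult_left_mono)
  also have "\<dots> \<le> 2 * (a * (h + lam)) * (w \<bullet> y) + 2 * a * E"
    using mult_left_mono[OF bounded, of a] a(1) by (simp add: algebra_simps)
  also have "\<dots> \<le> 9/2 * (w \<bullet> y) + 2 * a * E"
  proof -
    have "a * (h + lam) \<le> 9/4"
      using a lam by (simp add: field_simps)
    then show ?thesis
      using mult_right_mono[OF _ wy_nonneg] by fastforce
  qed
  finally have gradient_bound: "a * (norm (G x))\<^sup>2 \<le> 9/2 * (w \<bullet> y) + 2 * a * E" .
  have "a * (2 * c * (f x - finf)) \<le> a * (norm (G x))\<^sup>2"
    using mult_left_mono[OF PL] a(1) by simp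
  moreover have "(1 - c * a / 6) * (f x - finf) = (f x - finf) - a * (2 * c * (f x - finf)) / 12"
    by (simp add: field_simps)
  ultimately show ?thesis
    using regularized_step_decrease[OF der lip L a(1,2) lam(1) coercive, where x = x] gradient_bound
    unfolding E_def by linarith
qed

lemma s2qn_step_contraction:
  fixes f :: "real^'n \<Rightarrow> real" and B :: "real^'n^'n"
  assumes der: "\<And>x. (f has_derivative (\<lambda>v. G x \<bullet> v)) (at x)"
    and lip: "\<And>x y. norm (G x - G y) \<le> L * norm (x - y)" and L: "L \<ge> 0"
    and PL: "2 * c * (f x - finf) \<le> (norm (G x))\<^sup>2" and lower: "finf \<le> f x"
    and r: "0 < r1" "r1 < r2" and a: "a > 0" "a * L \<le> 1/4" "a * h \<le> 1/4"
    and B: "transpose B = B" "psd_between h B" "h > 0" and t: "0 \<le> t"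
  shows "f (x + 1 *\<^sub>R (- (matrix_inv (B + s2qn_lambda r1 r2 a t *\<^sub>R mat 1) *v y))) - finf
    \<le> max 0 (1 - c * a / 6) * (f x - finf) + 2 * a / 3 * (norm (y - G x))\<^sup>2"
proof -
  note lam = s2qn_lambda_bounds[OF r a(1) t]
  have "0 < s2qn_lambda r1 r2 a t"
    using lam(1) a(1) by (smt (verit) divide_pos_pos)
  note solve = regularized_solve_bounds[OF B this, of y]
  have "(1 - c * a / 6) * (f x - finf) \<le> max 0 (1 - c * a / 6) * (f x - finf)"
    using lower by (simp add: mult_right_mono)
  then show ?thesis
    using regularized_step_contraction[OF der lip L PL a lam solve] by simp
qed

lemma (in prob_space) nn_integral_le_of_nn_cond_exp_le:
  assumes G: "subalgebra M G" and f: "f \<in> borel_measurable M"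
    and bound: "AE \<omega> in M. nn_cond_exp M G f \<omega> \<le> ennreal s"
  shows "(\<integral>\<^sup>+ \<omega>. f \<omega> \<partial>M) \<le> ennreal s"
proof -
  interpret G: sigma_finite_subalgebra M G
    using G by (intro finite_measure_subalgebra_is_sigma_finite)
      (simp add: finite_measure_subalgebra_def finite_measure_subalgebra_axioms_def finite_measure_axioms)
  have "(\<integral>\<^sup>+ \<omega>. f \<omega> \<partial>M) = (\<integral>\<^sup>+ \<omega>. nn_cond_exp M G f \<omega> \<partial>M)"
    using G.nn_cond_exp_intg[of "\<lambda>_. 1" f] f by simp
  also have "\<dots> \<le> (\<integral>\<^sup>+ \<omega>. ennreal s \<partial>M)"
    by (rule nn_integral_mono_AE[OF bound])
  finally show ?thesis
    by (simp add: emeasure_space_1)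
qed

lemma (in prob_space) nn_integral_affine_le_cond_exp:
  assumes G: "subalgebra M G"
    and le: "\<And>\<omega>. \<omega> \<in> space M \<Longrightarrow> u \<omega> \<le> \<rho> * v \<omega> + K * e \<omega>"
    and nonneg: "\<And>\<omega>. \<omega> \<in> space M \<Longrightarrow> 0 \<le> v \<omega>" "\<And>\<omega>. \<omega> \<in> space M \<Longrightarrow> 0 \<le> e \<omega>"
      "0 \<le> \<rho>" "0 \<le> K" "0 \<le> s"
    and meas: "v \<in> borel_measurable M" "e \<in> borel_measurable M"
    and bound: "AE \<omega> in M. nn_cond_exp M G (\<lambda>\<omega>. ennreal (e \<omega>)) \<omega> \<le> ennreal s"
  shows "(\<integral>\<^sup>+ \<omega>. ennreal (u \<omega>) \<partial>M) \<le> ennreal \<rho> * (\<integral>\<^sup>+ \<omega>. ennreal (v \<omega>) \<partial>M) + ennreal (K * s)"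
proof -
  have "(\<integral>\<^sup>+ \<omega>. ennreal (u \<omega>) \<partial>M) \<le> (\<integral>\<^sup>+ \<omega>. ennreal \<rho> * ennreal (v \<omega>) + ennreal K * ennreal (e \<omega>) \<partial>M)"
    using le nonneg by (intro nn_integral_mono) (simp add: ennreal_leI flip: ennreal_mult ennreal_plus)
  also have "\<dots> = ennreal \<rho> * (\<integral>\<^sup>+ \<omega>. ennreal (v \<omega>) \<partial>M) + ennreal K * (\<integral>\<^sup>+ \<omega>. ennreal (e \<omega>) \<partial>M)"
    using meas by (simp add: nn_integral_add nn_integral_cmult)
  also have "\<dots> \<le> ennreal \<rho> * (\<integral>\<^sup>+ \<omega>. ennreal (v \<omega>) \<partial>M) + ennreal K * ennreal s"
    using nn_integral_le_of_nn_cond_exp_le[OF G _ bound] meas(2)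
    by (intro add_left_mono mult_left_mono) auto
  finally show ?thesis
    using nonneg(4,5) by (simp add: ennreal_mult)
qed

lemma ennreal_affine_recursion_geometric_bound:
  fixes u :: "nat \<Rightarrow> ennreal"
  assumes start: "u 0 \<le> ennreal \<mu>"
    and step: "\<And>n. u (Suc n) \<le> ennreal \<rho> * u n + ennreal (b n)"
    and b: "\<And>n. b n \<le> \<beta> * \<nu> ^ n"
    and rate: "\<rho> * \<mu> + \<beta> \<le> \<mu> * \<nu>"
    and nonneg: "0 \<le> \<rho>" "0 \<le> \<mu>" "0 \<le> \<nu>" "0 \<le> \<beta>"
  shows "u n \<le> ennreal (\<mu> * \<nu> ^ n)"
proof (induction n)
  case 0
  then show ?case using start by simp
next
  case (Suc n)
  have "u (Suc n) \<le> ennreal \<rho> * ennreal (\<mu> * \<nu> ^ n) + ennreal (\<beta> * \<nu> ^ n)"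
    using step[of n] Suc.IH b[of n]
    by (meson add_mono ennreal_leI mult_left_mono order_trans zero_le)
  also have "\<dots> = ennreal (\<rho> * (\<mu> * \<nu> ^ n) + \<beta> * \<nu> ^ n)"
    using nonneg by (simp add: ennreal_mult ennreal_plus)
  also have "\<dots> \<le> ennreal (\<mu> * \<nu> ^ Suc n)"
    using mult_right_mono[OF rate, of "\<nu> ^ n"] nonneg by (intro ennreal_leI) (simp add: algebra_simps)
  finally show ?case .
qed

lemma s2qn_rate_constants:
  fixes c a M\<sigma> \<mu> \<nu> :: real
  assumes "0 < c" "0 < a" "c * a < 8" "0 \<le> M\<sigma>"
    and \<mu>: "15 * M\<sigma> / c \<le> \<mu>" and \<nu>: "1 - c * a / 16 \<le> \<nu>"
  shows "max 0 (1 - c * a / 6) * \<mu> + 2 * a / 3 * M\<sigma> \<le> \<mu> * \<nu>"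
proof -
  have "15 * M\<sigma> \<le> c * \<mu>"
    using \<mu> assms(1) by (simp add: field_simps)
  then have noise: "15 * (a * M\<sigma>) \<le> c * a * \<mu>"
    using mult_left_mono[of "15 * M\<sigma>" "c * \<mu>" a] assms(2) by (simp add: algebra_simps)
  have \<mu>_nonneg: "0 \<le> \<mu>"
    using \<mu> assms(1,4) by (smt (verit) divide_nonneg_pos)
  have rate: "\<mu> - c * a * \<mu> / 16 \<le> \<mu> * \<nu>"
    using mult_left_mono[OF \<nu> \<mu>_nonneg] by (simp add: algebra_simps)
  have large_step: "c * a * \<mu> \<le> 8 * \<mu>"
    using mult_right_mono[of "c * a" 8 \<mu>] assms(3) \<mu>_nonneg by simp
  have noise_term: "2 * a / 3 * M\<sigma> = 2/3 * (a * M\<sigma>)" "0 \<le> a * M\<sigma>"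
    using assms(2,4) by simp_all
  show ?thesis
  proof (cases "c * a \<le> 6")
    case True
    then have "max 0 (1 - c * a / 6) * \<mu> = \<mu> - c * a * \<mu> / 6"
      by (simp add: algebra_simps)
    then show ?thesis
      using noise rate noise_term by linarith
  next
    case False
    then have "max 0 (1 - c * a / 6) * \<mu> = 0"
      by simp
    then show ?thesis
      using noise rate large_step noise_term \<mu>_nonneg by linarith
  qed
qed

lemma s2qn_gap_geometric_decay:
  fixes E :: "nat \<Rightarrow> ennreal" and \<sigma> :: "nat \<Rightarrow> real"
  assumes start: "E 1 \<le> ennreal D" and D: "0 \<le> D"
    and step: "\<And>k. k \<ge> 1 \<Longrightarrow>
      E (Suc k) \<le> ennreal (max 0 (1 - c * a / 6)) * E k + ennreal (2 * a / 3 * (\<sigma> k)\<^sup>2)"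
    and \<sigma>: "\<And>k. (\<sigma> k)\<^sup>2 \<le> M\<sigma> * \<zeta> ^ k" and \<zeta>: "0 \<le> \<zeta>" "\<zeta> \<le> 1"
    and c: "0 < c" and a: "0 < a" "c * a < 8" and k: "k \<ge> 1"
  shows "E k \<le> ennreal (max D (15 * M\<sigma> / c) * max \<zeta> (1 - c * a / 16) ^ (k - 1))"
proof -
  define \<mu> where "\<mu> = max D (15 * M\<sigma> / c)"
  define \<nu> where "\<nu> = max \<zeta> (1 - c * a / 16)"
  have M\<sigma>_nonneg: "0 \<le> M\<sigma>"
    using order_trans[OF zero_le_power2 \<sigma>[of 0]] by simp
  have noise_decay: "2 * a / 3 * (\<sigma> (Suc n))\<^sup>2 \<le> 2 * a / 3 * M\<sigma> * \<nu> ^ n" for n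
  proof -
    have "\<zeta> ^ Suc n \<le> \<zeta> ^ n"
      using \<zeta> by (intro power_decreasing) auto
    also have "\<dots> \<le> \<nu> ^ n"
      using \<zeta> by (intro power_mono) (auto simp: \<nu>_def)
    finally have "(\<sigma> (Suc n))\<^sup>2 \<le> M\<sigma> * \<nu> ^ n"
      using \<sigma>[of "Suc n"] mult_left_mono[OF _ M\<sigma>_nonneg] by (meson order_trans)
    then show ?thesis
      using a(1) by simp
  qed
  have start_\<mu>: "E (Suc 0) \<le> ennreal \<mu>"
    using order_trans[OF start ennreal_leI[of D \<mu>]] by (simp add: \<mu>_def)
  have rate: "max 0 (1 - c * a / 6) * \<mu> + 2 * a / 3 * M\<sigma> \<le> \<mu> * \<nu>"
    by (rule s2qn_rate_constants[OF c a M\<sigma>_nonneg]) (simp_all add: \<mu>_def \<nu>_def)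
  have "E (Suc n) \<le> ennreal (\<mu> * \<nu> ^ n)" for n
    by (rule ennreal_affine_recursion_geometric_bound[where u = "\<lambda>n. E (Suc n)",
          OF start_\<mu> step noise_decay rate])
      (use D \<zeta> a(1) M\<sigma>_nonneg in \<open>simp_all add: \<mu>_def \<nu>_def\<close>)
  then show ?thesis
    using k by (auto simp: \<mu>_def \<nu>_def dest!: Suc_le_D)
qed

lemma has_derivative_scaled_sum_inner:
  assumes "\<And>i. i \<in> I \<Longrightarrow> (f i has_derivative (\<lambda>v. G i x \<bullet> v)) (at x)"
  shows "((\<lambda>x. r * (\<Sum>i\<in>I. f i x)) has_derivative (\<lambda>v. (r *\<^sub>R (\<Sum>i\<in>I. G i x)) \<bullet> v)) (at x)"
proof -
  have "((\<lambda>x. r * (\<Sum>i\<in>I. f i x)) has_derivative (\<lambda>v. r * (\<Sum>i\<in>I. G i x \<bullet> v))) (at x)"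
    using assms by (intro has_derivative_mult_right has_derivative_sum)
  then show ?thesis
    by (simp add: inner_sum_left)
qed

lemma small_step_size_bounds:
  fixes \<alpha> r1 r2 L h c :: real
  assumes \<alpha>: "0 < \<alpha>" "\<alpha> < min (r1 / (4 * r2 * (L + h))) (8 / c)"
    and "0 < r1" "r1 < r2" "0 \<le> L" "0 < h" "0 < c"
  shows "\<alpha> * L \<le> 1/4" and "\<alpha> * h \<le> 1/4" and "c * \<alpha> < 8"
proof -
  have "\<alpha> * (4 * r2 * (L + h)) < r1"
    using \<alpha> assms(3-6) by (simp add: pos_less_divide_eq)
  then have "r2 * (4 * (\<alpha> * (L + h))) < r2 * 1"
    using assms(4) by (simp add: algebra_simps)
  then have "4 * (\<alpha> * (L + h)) < 1"
    by (rule mult_left_less_imp_less) (use assms(3,4) in simp)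
  then have "\<alpha> * L + \<alpha> * h < 1/4"
    by (simp add: distrib_left)
  moreover have "0 \<le> \<alpha> * L" "0 \<le> \<alpha> * h"
    using \<alpha>(1) assms(5,6) by simp_all
  ultimately show "\<alpha> * L \<le> 1/4" "\<alpha> * h \<le> 1/4"
    by linarith+
  show "c * \<alpha> < 8"
    using \<alpha> assms(7) by (simp add: field_simps)
qed

theorem theorem2:
  fixes M :: "'a measure"
    and F :: "nat \<Rightarrow> 'a measure"
    and N :: nat
    and \<psi> :: "nat \<Rightarrow> real^'n \<Rightarrow> real"
    and g\<psi> :: "nat \<Rightarrow> real^'n \<Rightarrow> real^'n"
    and \<Psi> :: "real^'n \<Rightarrow> real"
    and grad\<Psi> :: "real^'n \<Rightarrow> real^'n"
    and \<theta> :: "nat \<Rightarrow> 'a \<Rightarrow> real^'n"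
    and \<theta>1 :: "real^'n"
    and S :: "nat \<Rightarrow> 'a \<Rightarrow> nat set"
    and g :: "nat \<Rightarrow> 'a \<Rightarrow> real^'n"
    and B :: "nat \<Rightarrow> 'a \<Rightarrow> real^'n^'n"
    and \<sigma> :: "nat \<Rightarrow> real"
    and r1 r2 \<alpha> \<Psi>inf L h c M\<sigma> \<zeta> :: real
  assumes prob: "prob_space M"
    and filt: "filtration (space M) F"
    and subalg: "\<And>k. subalgebra M (F k)"
    and N_pos: "N \<ge> 1"
    and \<psi>_diff: "\<And>i x. i \<in> {1..N} \<Longrightarrow> (\<psi> i has_derivative (\<lambda>v. g\<psi> i x \<bullet> v)) (at x)"
    and \<Psi>_def: "\<And>x. \<Psi> x = (1 / real N) * (\<Sum>i = 1..N. \<psi> i x)"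
    and grad\<Psi>_def: "\<And>x. grad\<Psi> x = (1 / real N) *\<^sub>R (\<Sum>i = 1..N. g\<psi> i x)"
    \<comment> \<open>(i)\<close>
    and \<Psi>_C1: "continuous_on UNIV grad\<Psi>"
    and \<Psi>_lb: "\<And>x. \<Psi>inf \<le> \<Psi> x"
    and L_ge: "L \<ge> 1"
    and \<Psi>_lip: "\<And>x y. norm (grad\<Psi> x - grad\<Psi> y) \<le> L * norm (x - y)"
    \<comment> \<open>method\<close>
    and r: "0 < r1" "r1 < r2"
    and \<alpha>_pos: "0 < \<alpha>"
    and \<theta>_init: "\<And>\<omega>. \<theta> 1 \<omega> = \<theta>1"
    and S_sub: "\<And>k \<omega>. k \<ge> 1 \<Longrightarrow> \<omega> \<in> space M \<Longrightarrow> S k \<omega> \<subseteq> {1..N} \<and> S k \<omega> \<noteq> {}"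
    and g_def: "\<And>k \<omega>. k \<ge> 1 \<Longrightarrow> \<omega> \<in> space M \<Longrightarrow>
        g k \<omega> = (1 / real (card (S k \<omega>))) *\<^sub>R (\<Sum>i \<in> S k \<omega>. g\<psi> i (\<theta> k \<omega>))"
    and g_meas: "\<And>k. g k \<in> borel_measurable M"
    and B_meas: "\<And>k. B k \<in> borel_measurable M"
    and B_sym: "\<And>k \<omega>. k \<ge> 1 \<Longrightarrow> \<omega> \<in> space M \<Longrightarrow> transpose (B k \<omega>) = B k \<omega>"
    and \<theta>_step: "\<And>k \<omega>. k \<ge> 1 \<Longrightarrow> \<omega> \<in> space M \<Longrightarrow>
        \<theta> (Suc k) \<omega> = \<theta> k \<omega> + 1 *\<^sub>R
          (- (matrix_inv (B k \<omega> + s2qn_lambda r1 r2 \<alpha> (norm (g (k - 1) \<omega>)) *\<^sub>R mat 1) *v g k \<omega>))"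
    \<comment> \<open>filtration / measurability\<close>
    and \<theta>_adapted: "\<And>k. k \<ge> 1 \<Longrightarrow> \<theta> k \<in> borel_measurable (F (k - 1))"
    and g_adapted: "\<And>k. g k \<in> borel_measurable (F k)"
    \<comment> \<open>(ii)\<close>
    and cindep: "\<And>k. k \<ge> 1 \<Longrightarrow> cond_indep M (F (k - 1)) (B k) (g k)"
    and g_int: "\<And>k j. k \<ge> 1 \<Longrightarrow> integrable M (\<lambda>\<omega>. g k \<omega> $ j)"
    and unbiased: "\<And>k j. k \<ge> 1 \<Longrightarrow>
        AE \<omega> in M. real_cond_exp M (F (k - 1)) (\<lambda>\<omega>. g k \<omega> $ j) \<omega> = grad\<Psi> (\<theta> k \<omega>) $ j"
    \<comment> \<open>(iii)\<close>
    and var_bd: "\<And>k. k \<ge> 1 \<Longrightarrow>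
        AE \<omega> in M. nn_cond_exp M (F (k - 1))
            (\<lambda>\<omega>. ennreal ((norm (g k \<omega> - grad\<Psi> (\<theta> k \<omega>)))\<^sup>2)) \<omega> \<le> ennreal ((\<sigma> k)\<^sup>2)"
    \<comment> \<open>(iv)\<close>
    and h_pos: "h > 0"
    and B_bd: "\<And>k \<omega>. k \<ge> 1 \<Longrightarrow> \<omega> \<in> space M \<Longrightarrow> psd_between h (B k \<omega>)"
    \<comment> \<open>(v) PL\<close>
    and c_pos: "0 < c"
    and PL: "\<And>x. 2 * c * (\<Psi> x - \<Psi>inf) \<le> (norm (grad\<Psi> x))\<^sup>2"
    \<comment> \<open>parameters\<close>
    and \<alpha>_small: "\<alpha> < min (r1 / (4 * r2 * (L + h))) (8 / c)"
    and \<zeta>: "0 < \<zeta>" "\<zeta> < 1"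
    and \<sigma>_bd: "\<And>k. (\<sigma> k)\<^sup>2 \<le> M\<sigma> * \<zeta> ^ k"
  shows "\<forall>k \<ge> 1. (\<integral>\<^sup>+ \<omega>. ennreal (\<Psi> (\<theta> k \<omega>) - \<Psi>inf) \<partial>M)
           \<le> ennreal (max (\<Psi> \<theta>1 - \<Psi>inf) (15 * M\<sigma> / c)
                      * (max \<zeta> (1 - c * \<alpha> / 16)) ^ (k - 1))"
proof -
  interpret prob_space M by (rule prob)
  have \<Psi>_eq: "\<Psi> = (\<lambda>x. (1 / real N) * (\<Sum>i = 1..N. \<psi> i x))"
    using \<Psi>_def by (rule ext)
  have \<Psi>_deriv: "(\<Psi> has_derivative (\<lambda>v. grad\<Psi> x \<bullet> v)) (at x)" for x
    unfolding \<Psi>_eq grad\<Psi>_def by (rule has_derivative_scaled_sum_inner) (rule \<psi>_diff)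
  have L: "0 \<le> L"
    using L_ge by simp
  note step_size = small_step_size_bounds[OF \<alpha>_pos \<alpha>_small r L h_pos c_pos]
  define err where "err k \<omega> = (norm (g k \<omega> - grad\<Psi> (\<theta> k \<omega>)))\<^sup>2" for k \<omega>
  have \<Psi>_cont: "continuous_on UNIV \<Psi>"
    using \<Psi>_deriv by (intro has_derivative_continuous_on) (blast intro: has_derivative_at_withinI)
  have meas: "(\<lambda>\<omega>. \<Psi> (\<theta> k \<omega>) - \<Psi>inf) \<in> borel_measurable M" "err k \<in> borel_measurable M"
    if "k \<ge> 1" for k
    using measurable_from_subalg[OF subalg \<theta>_adapted[OF that]] g_meas[of k]
      borel_measurable_continuous_onI[OF \<Psi>_cont] borel_measurable_continuous_onI[OF \<Psi>_C1]
    unfolding err_def by measurable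
  have point: "\<Psi> (\<theta> (Suc k) \<omega>) - \<Psi>inf
      \<le> max 0 (1 - c * \<alpha> / 6) * (\<Psi> (\<theta> k \<omega>) - \<Psi>inf) + 2 * \<alpha> / 3 * err k \<omega>"
    if "k \<ge> 1" "\<omega> \<in> space M" for k \<omega>
    unfolding \<theta>_step[OF that] err_def
    by (rule s2qn_step_contraction[OF \<Psi>_deriv \<Psi>_lip L PL \<Psi>_lb r \<alpha>_pos step_size(1,2)
          B_sym[OF that] B_bd[OF that] h_pos norm_ge_zero])
  show ?thesis
  proof (intro allI impI s2qn_gap_geometric_decay[where \<sigma> = \<sigma>])
    show "(\<integral>\<^sup>+ \<omega>. ennreal (\<Psi> (\<theta> (Suc k) \<omega>) - \<Psi>inf) \<partial>M)
        \<le> ennreal (max 0 (1 - c * \<alpha> / 6)) * (\<integral>\<^sup>+ \<omega>. ennreal (\<Psi> (\<theta> k \<omega>) - \<Psi>inf) \<partial>M)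
          + ennreal (2 * \<alpha> / 3 * (\<sigma> k)\<^sup>2)" if "k \<ge> 1" for k
      using var_bd[OF that] \<Psi>_lb \<alpha>_pos
      by (intro nn_integral_affine_le_cond_exp[OF subalg point[OF that] _ _ _ _ _ meas[OF that]])
        (simp_all add: err_def)
  qed (use \<theta>_init \<Psi>_lb[of \<theta>1] \<sigma>_bd \<zeta> c_pos \<alpha>_pos step_size(3) in \<open>simp_all add: emeasure_space_1\<close>)
qed

end
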